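(* Let $B$ be a nonzero real constant and let $(x_n)_{n\ge0}$ be a (well-defined) solution of $$x_{n+10}=\frac{x_n}{-1+B\,x_nx_{n+2}x_{n+4}x_{n+6}x_{n+8}},\qquad n\ge 0,$$ with initial conditions $x_0,\dots,x_9$. Then the solution is periodic with period $20$, i.e. $x_{n+20}=x_n$ for all $n\ge 0$; explicitly, for $k\in\{0,\dots,9\}$ and $P_k=x_{\tau(k)}x_{\tau(k)+2}x_{\tau(k)+4}x_{\tau(k)+6}x_{\tau(k)+8}$, one has $x_{10+k}=x_k/(-1+BP_k)$ if $\lfloor k/2\rfloor$ is even and $x_{10+k}=x_k(-1+BP_k)$ if $\lfloor k/2\rfloor$ is odd.
   Context: $\tau(k)\in\{0,1\}$ is the remainder of $k$ upon division by $2$, and $\lfloor\cdot\rfloor$ is the floor function. *)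

theory Defs
  imports Complex_Main
begin

definition tau :: "nat \<Rightarrow> nat" where
  "tau k = k mod 2"

end

theory Submission
  imports Defs
begin

(* Write E n for the denominator -1 + B x_n x_(n+2) ... x_(n+8). Since B x_n ... x_(n+8) = E n + 1
   and x_(n+10) = x_n / E n, shifting the window by two gives E (n+2) = 1 / E n. Hence E has
   period 4, E (n+10) = 1 / E n, and x_(n+20) = x_(n+10) / E (n+10) = (x_n / E n) * E n = x_n. *)

definition rec_denom :: "'a::field \<Rightarrow> (nat \<Rightarrow> 'a) \<Rightarrow> nat \<Rightarrow> 'a" where
  "rec_denom B x n = -1 + B * x n * x (n+2) * x (n+4) * x (n+6) * x (n+8)"

locale period_20_recurrence =
  fixes B :: "'a::field" and x :: "nat \<Rightarrow> 'a"
  assumes rec_denom_nonzero: "rec_denom B x n \<noteq> 0"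
    and recurrence: "x (n+10) = x n / rec_denom B x n"
begin

lemma rec_denom_add_2: "rec_denom B x (n+2) = inverse (rec_denom B x n)"
proof -
  let ?E = "rec_denom B x n"
  have "rec_denom B x (n+2) = -1 + B * x (n+2) * x (n+4) * x (n+6) * x (n+8) * x (n+10)"
    by (simp add: rec_denom_def ac_simps numeral_eq_Suc)
  also have "\<dots> = -1 + (?E + 1) / ?E"
    by (simp add: recurrence rec_denom_def field_simps)
  also have "\<dots> = inverse ?E"
    using rec_denom_nonzero[of n] by (simp add: field_simps)
  finally show ?thesis .
qed

lemma rec_denom_add_even:
  "rec_denom B x (n + 2*j) = (if even j then rec_denom B x n else inverse (rec_denom B x n))"
proof (induction j)
  case 0
  then show ?case by simp
next
  case (Suc j)
  have "rec_denom B x (n + 2 * Suc j) = inverse (rec_denom B x (n + 2*j))"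
    using rec_denom_add_2[of "n + 2*j"] by (simp add: add.assoc)
  with Suc.IH show ?case by simp
qed

lemma periodic_20: "x (n+20) = x n"
proof -
  have "x (n+20) = x (n+10) / rec_denom B x (n+10)"
    using recurrence[of "n+10"] by (simp add: add.assoc)
  also have "\<dots> = x n / rec_denom B x n * rec_denom B x n"
    using rec_denom_add_even[of n 5] by (simp add: recurrence divide_inverse)
  also have "\<dots> = x n"
    using rec_denom_nonzero[of n] by simp
  finally show ?thesis .
qed

lemma initial_block:
  "x (10+k) = (if even (k div 2) then x k / rec_denom B x (tau k)
               else x k * rec_denom B x (tau k))"
proof -
  have "k = tau k + 2 * (k div 2)"
    by (simp add: tau_def)
  then have "rec_denom B x k = (if even (k div 2) then rec_denom B x (tau k)
                                else inverse (rec_denom B x (tau k)))"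
    by (metis rec_denom_add_even)
  then show ?thesis
    using recurrence[of k] by (simp add: add.commute divide_inverse)
qed

end

theorem theorem1:
  fixes B :: real and x :: "nat \<Rightarrow> real"
  assumes hB: "B \<noteq> 0"
    and wd: "\<forall>n. -1 + B * x n * x (n+2) * x (n+4) * x (n+6) * x (n+8) \<noteq> 0"
    and rec: "\<forall>n. x (n+10) = x n / (-1 + B * x n * x (n+2) * x (n+4) * x (n+6) * x (n+8))"
  shows "(\<forall>n. x (n+20) = x n) \<and>
    (\<forall>k<10. let P = x (tau k) * x (tau k + 2) * x (tau k + 4) * x (tau k + 6) * x (tau k + 8) in
       (even (k div 2) \<longrightarrow> x (10+k) = x k / (-1 + B * P)) \<and>
       (odd (k div 2) \<longrightarrow> x (10+k) = x k * (-1 + B * P)))"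
proof -
  interpret period_20_recurrence B x
    using wd rec by unfold_locales (simp_all add: rec_denom_def)
  have "-1 + B * (x (tau k) * x (tau k + 2) * x (tau k + 4) * x (tau k + 6) * x (tau k + 8))
        = rec_denom B x (tau k)" for k
    by (simp add: rec_denom_def mult.assoc)
  then show ?thesis
    using periodic_20 initial_block by (simp add: Let_def)
qed

end
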